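(* Let $\mathsf{K}$ be a field, $m$ a positive integer and $\alpha \in \mathsf{K}$ a primitive $m$-th root of unity. Let $f \in \mathsf{K}[z]$ be a polynomial with at most $t$ nonzero terms and $\deg f < m$, and let $a_i = f(\alpha^i)$ for $i \ge 0$. Let $r \ge 0$, $s > 0$ and $k$ be integers with $\gcd(s,m)=1$ and $k \ge 2t$. Then $f$ is determined by the affine sub-sequence $(a_r, a_{r+s}, a_{r+2s}, \dots, a_{r+(k-1)s})$: if $g \in \mathsf{K}[z]$ has at most $t$ nonzero terms, $\deg g < m$, and $g(\alpha^{r+is}) = a_{r+is}$ for all $0 \le i \le k-1$, then $g = f$. *)

theory Defs
  imports "HOL-Computational_Algebra.Polynomial"
begin

definition primitive_root_of_unity :: "nat \<Rightarrow> 'a::field \<Rightarrow> bool" where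
  "primitive_root_of_unity m \<alpha> \<longleftrightarrow> 0 < m \<and> \<alpha> ^ m = 1 \<and> (\<forall>j. 0 < j \<and> j < m \<longrightarrow> \<alpha> ^ j \<noteq> 1)"

definition num_terms :: "'a::zero poly \<Rightarrow> nat" where
  "num_terms p = card {i. coeff p i \<noteq> 0}"

end

theory Submission
  imports Defs "HOL-Number_Theory.Cong"
begin

text \<open>
  The difference \<open>h = g - f\<close> has at most \<open>2t \<le> k\<close> terms, and its values at the points
  \<open>\<alpha>\<^sup>r (\<alpha>\<^sup>s)\<^sup>i\<close>, \<open>i < k\<close>, all vanish. Writing \<open>h\<close> as a sum over its support \<open>S\<close>, this is a
  homogeneous Vandermonde system in the unknowns \<open>coeff h j \<cdot> (\<alpha>\<^sup>r)\<^sup>j\<close> with nodes \<open>(\<alpha>\<^sup>s)\<^sup>j\<close>,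
  \<open>j \<in> S\<close>. Since \<open>\<alpha>\<^sup>s\<close> is again a primitive \<open>m\<close>-th root of unity and \<open>S \<subseteq> {..<m}\<close>, the
  nodes are distinct, so the system only has the trivial solution and \<open>h = 0\<close>.
\<close>

lemma power_sums_eq_0_imp_eq_0:
  fixes d \<beta> :: "'b \<Rightarrow> 'a::field"
  assumes fin: "finite S" and card: "card S \<le> k" and inj: "inj_on \<beta> S"
    and sums: "\<And>i. i < k \<Longrightarrow> (\<Sum>j\<in>S. d j * \<beta> j ^ i) = 0" and j: "j \<in> S"
  shows "d j = 0"
proof -
  have linear: "(\<Sum>l\<in>S. d l * poly p (\<beta> l)) = 0" if "degree p < k" for p
  proof -
    have "(\<Sum>l\<in>S. d l * poly p (\<beta> l)) = (\<Sum>i\<le>degree p. coeff p i * (\<Sum>l\<in>S. d l * \<beta> l ^ i))"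
      by (simp add: poly_altdef sum_distrib_left sum.swap[of _ S] mult_ac)
    also have "\<dots> = 0" using that sums by simp
    finally show ?thesis .
  qed
  \<comment> \<open>Test the sums against the polynomial vanishing at every node except \<open>\<beta> j\<close>.\<close>
  define P where "P = (\<Prod>l\<in>S-{j}. [:-\<beta> l, 1:])"
  have poly_P: "poly P x = (\<Prod>l\<in>S-{j}. x - \<beta> l)" for x
    by (simp add: P_def poly_prod)
  have "degree P \<le> card (S - {j})"
    using degree_prod_sum_le[of "S-{j}" "\<lambda>l. [:-\<beta> l, 1:]"] fin by (simp add: P_def o_def)
  also have "\<dots> < k" using card card_Diff1_less[OF fin j] by linarith
  finally have "(\<Sum>l\<in>S. d l * poly P (\<beta> l)) = 0" by (rule linear)
  moreover have "(\<Sum>l\<in>S. d l * poly P (\<beta> l)) = d j * poly P (\<beta> j)"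
    using fin j by (subst sum.remove[of S j]) (auto simp: poly_P intro!: sum.neutral prod_zero)
  moreover have "poly P (\<beta> j) \<noteq> 0"
    using fin inj j by (auto simp: poly_P inj_on_def)
  ultimately show ?thesis by simp
qed

lemma primitive_root_of_unity_nonzero:
  assumes "primitive_root_of_unity m \<alpha>"
  shows "\<alpha> \<noteq> 0"
  using assms by (auto simp: primitive_root_of_unity_def power_0_left)

lemma primitive_root_of_unity_power_eq_1_iff:
  assumes "primitive_root_of_unity m \<alpha>"
  shows "\<alpha> ^ n = 1 \<longleftrightarrow> m dvd n"
proof -
  have m: "0 < m" "\<alpha> ^ m = 1" and prim: "\<And>j. 0 < j \<Longrightarrow> j < m \<Longrightarrow> \<alpha> ^ j \<noteq> 1"
    using assms unfolding primitive_root_of_unity_def by auto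
  have "\<alpha> ^ n = (\<alpha> ^ m) ^ (n div m) * \<alpha> ^ (n mod m)"
    by (simp flip: power_mult power_add)
  also have "\<dots> = \<alpha> ^ (n mod m)"
    using m(2) by simp
  finally have "\<alpha> ^ n = \<alpha> ^ (n mod m)" .
  moreover have "\<alpha> ^ (n mod m) = 1 \<longleftrightarrow> n mod m = 0"
    using prim[of "n mod m"] m(1) by fastforce
  ultimately show ?thesis
    by (simp add: dvd_eq_mod_eq_0)
qed

lemma primitive_root_of_unity_power_eq_iff:
  assumes "primitive_root_of_unity m \<alpha>"
  shows "\<alpha> ^ a = \<alpha> ^ b \<longleftrightarrow> [a = b] (mod m)"
proof -
  have ordered: "\<alpha> ^ a = \<alpha> ^ b \<longleftrightarrow> [b = a] (mod m)" if "a \<le> b" for a b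
  proof -
    have "\<alpha> ^ b = \<alpha> ^ a * \<alpha> ^ (b - a)"
      using that by (simp flip: power_add)
    then have "\<alpha> ^ a = \<alpha> ^ b \<longleftrightarrow> \<alpha> ^ (b - a) = 1"
      using primitive_root_of_unity_nonzero[OF assms] by auto
    also have "\<dots> \<longleftrightarrow> [b = a] (mod m)"
      using that by (simp add: primitive_root_of_unity_power_eq_1_iff[OF assms] cong_altdef_nat)
    finally show ?thesis .
  qed
  show ?thesis
  proof (cases "a \<le> b")
    case True
    then show ?thesis using ordered[of a b] cong_sym by blast
  next
    case False
    then show ?thesis using ordered[of b a] by auto
  qed
qed

lemma inj_on_primitive_root_power:
  assumes "primitive_root_of_unity m \<alpha>" and "coprime s m"
  shows "inj_on (\<lambda>j. (\<alpha> ^ s) ^ j) {..<m}"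
proof (rule inj_onI)
  fix x y assume "x \<in> {..<m}" "y \<in> {..<m}" and eq: "(\<alpha> ^ s) ^ x = (\<alpha> ^ s) ^ y"
  from eq have "\<alpha> ^ (x * s) = \<alpha> ^ (y * s)"
    by (simp add: mult.commute power_mult)
  then have "[x * s = y * s] (mod m)"
    using primitive_root_of_unity_power_eq_iff[OF assms(1)] by blast
  then have "[x = y] (mod m)"
    using cong_mult_rcancel_nat[OF assms(2)] by blast
  then show "x = y"
    using cong_less_modulus_unique_nat \<open>x \<in> {..<m}\<close> \<open>y \<in> {..<m}\<close> by blast
qed

lemma finite_coeff_support: "finite {i. coeff p i \<noteq> 0}"
  using MOST_coeff_eq_0[of p] by (simp add: eventually_cofinite)

lemma num_terms_diff_le:
  fixes p q :: "'a::ab_group_add poly"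
  shows "num_terms (p - q) \<le> num_terms p + num_terms q"
proof -
  have "{i. coeff (p - q) i \<noteq> 0} \<subseteq> {i. coeff p i \<noteq> 0} \<union> {i. coeff q i \<noteq> 0}"
    by auto
  hence "num_terms (p - q) \<le> card ({i. coeff p i \<noteq> 0} \<union> {i. coeff q i \<noteq> 0})"
    unfolding num_terms_def by (intro card_mono) (auto simp: finite_coeff_support)
  also have "\<dots> \<le> num_terms p + num_terms q"
    unfolding num_terms_def by (rule card_Un_le)
  finally show ?thesis .
qed

lemma poly_eq_sum_coeff_support:
  "poly p x = (\<Sum>i\<in>{i. coeff p i \<noteq> 0}. coeff p i * x ^ i)"
  for x :: "'a::{comm_semiring_0,semiring_1}"
  unfolding poly_altdef by (rule sum.mono_neutral_right) (auto simp: le_degree)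

lemma sparse_poly_eq_0_if_vanishes_on_geometric_sequence:
  fixes p :: "'a::field poly"
  assumes terms: "num_terms p \<le> k" and "c \<noteq> 0"
    and inj: "inj_on (\<lambda>j. \<beta> ^ j) {i. coeff p i \<noteq> 0}"
    and zeros: "\<And>i. i < k \<Longrightarrow> poly p (c * \<beta> ^ i) = 0"
  shows "p = 0"
proof (rule poly_eqI)
  fix j
  let ?S = "{i. coeff p i \<noteq> 0}"
  show "coeff p j = coeff 0 j"
  proof (cases "j \<in> ?S")
    case True
    have "(\<Sum>l\<in>?S. (coeff p l * c ^ l) * (\<beta> ^ l) ^ i) = 0" if "i < k" for i
      using zeros[OF that]
      by (simp add: poly_eq_sum_coeff_support power_mult_distrib mult_ac flip: power_mult)
    then have "coeff p j * c ^ j = 0"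
      using power_sums_eq_0_imp_eq_0[OF finite_coeff_support _ inj _ True, where d = "\<lambda>l. coeff p l * c ^ l"]
        terms by (simp add: num_terms_def)
    with \<open>c \<noteq> 0\<close> show ?thesis by simp
  qed simp
qed

theorem lemma1:
  fixes \<alpha> :: "'a::field" and f g :: "'a poly" and m t r s k :: nat and a :: "nat \<Rightarrow> 'a"
  assumes "0 < m"
    and "primitive_root_of_unity m \<alpha>"
    and "num_terms f \<le> t" and "degree f < m"
    and "\<And>i. a i = poly f (\<alpha> ^ i)"
    and "0 < s" and "gcd s m = 1" and "k \<ge> 2 * t"
    and "num_terms g \<le> t" and "degree g < m"
    and "\<And>i. i < k \<Longrightarrow> poly g (\<alpha> ^ (r + i * s)) = a (r + i * s)"
  shows "g = f"
proof -
  have "g - f = 0"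
  proof (rule sparse_poly_eq_0_if_vanishes_on_geometric_sequence)
    show "num_terms (g - f) \<le> k"
      using num_terms_diff_le[of g f] assms(3,8,9) by linarith
    show "\<alpha> ^ r \<noteq> 0"
      using primitive_root_of_unity_nonzero[OF assms(2)] by simp
    have "degree (g - f) < m"
      using degree_diff_le_max[of g f] assms(4,10) by linarith
    then have "{i. coeff (g - f) i \<noteq> 0} \<subseteq> {..<m}"
      using le_degree by fastforce
    moreover have "coprime s m" using assms(7) by (simp add: coprime_iff_gcd_eq_1)
    ultimately show "inj_on (\<lambda>j. (\<alpha> ^ s) ^ j) {i. coeff (g - f) i \<noteq> 0}"
      using inj_on_primitive_root_power[OF assms(2)] inj_on_subset by blast
    show "poly (g - f) (\<alpha> ^ r * (\<alpha> ^ s) ^ i) = 0" if "i < k" for i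
      using assms(5) assms(11)[OF that] by (simp add: power_add mult.commute flip: power_mult)
  qed
  then show ?thesis by simp
qed

end
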